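(* Let $f:\mathbb{R}^d\to\mathbb{R}^d$ be a diffeomorphism. Let $\mathcal{C}$ denote the set of non-empty compact subsets of $\mathbb{R}^d$, let $d:\mathcal{C}\times\mathcal{C}\to[0,\infty)$ be any metric on $\mathcal{C}$, and define $E:\mathcal{C}\to[0,\infty)$ by $E(X)=d(X,f(X))$. For $r>0$ let $B_r(0)$ be the ball of radius $r$ centered at $0$, and for a compact set $Q\subset\mathbb{R}^d$ let $\mathrm{Inv}(Q)=\{x\in Q \mid f^k(x)\in Q \text{ for all } k\in\mathbb{Z}\}$ be the maximal invariant set in $Q$. Suppose that there is $S\in\mathcal{C}$ such that $\mathrm{Inv}(B_r(0))=S$ for all sufficiently large $r$. Then $S$ is the unique minimizer of $E$ on $\mathcal{C}$ which is maximal with respect to the partial order given by set inclusion $\subseteq$.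
   Context: A set $X\subset\mathbb{R}^d$ is called invariant if $X=f(X)$. Since $d$ is a metric, $E(X)=0$ if and only if $X$ is invariant. *)

theory Defs
  imports "HOL-Analysis.Analysis"
begin

definition C1_map :: "('a::euclidean_space \<Rightarrow> 'a) \<Rightarrow> bool" where
  "C1_map f \<longleftrightarrow> (\<exists>f'::'a \<Rightarrow> ('a \<Rightarrow>\<^sub>L 'a).
      (\<forall>x. (f has_derivative blinfun_apply (f' x)) (at x)) \<and> continuous_on UNIV f')"

definition diffeomorphism :: "('a::euclidean_space \<Rightarrow> 'a) \<Rightarrow> bool" where
  "diffeomorphism f \<longleftrightarrow> bij f \<and> C1_map f \<and> C1_map (inv f)"

definition fpow :: "('a \<Rightarrow> 'a) \<Rightarrow> int \<Rightarrow> 'a \<Rightarrow> 'a" where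
  "fpow f k = (if 0 \<le> k then f ^^ nat k else inv f ^^ nat (- k))"

definition Inv :: "('a \<Rightarrow> 'a) \<Rightarrow> 'a set \<Rightarrow> 'a set" where
  "Inv f Q = {x \<in> Q. \<forall>k::int. fpow f k x \<in> Q}"

definition Cpt :: "'a::topological_space set set" where
  "Cpt = {X. X \<noteq> {} \<and> compact X}"

definition metric_on :: "'b set \<Rightarrow> ('b \<Rightarrow> 'b \<Rightarrow> real) \<Rightarrow> bool" where
  "metric_on M D \<longleftrightarrow>
     (\<forall>x\<in>M. \<forall>y\<in>M. 0 \<le> D x y \<and> (D x y = 0 \<longleftrightarrow> x = y) \<and> D x y = D y x) \<and>
     (\<forall>x\<in>M. \<forall>y\<in>M. \<forall>z\<in>M. D x z \<le> D x y + D y z)"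

definition energy :: "('a set \<Rightarrow> 'a set \<Rightarrow> real) \<Rightarrow> ('a \<Rightarrow> 'a) \<Rightarrow> 'a set \<Rightarrow> real" where
  "energy D f X = D X (f ` X)"

definition is_minimizer :: "('a::topological_space set \<Rightarrow> real) \<Rightarrow> 'a set \<Rightarrow> bool" where
  "is_minimizer E X \<longleftrightarrow> X \<in> Cpt \<and> (\<forall>Y\<in>Cpt. E X \<le> E Y)"

definition is_maximal_minimizer :: "('a::topological_space set \<Rightarrow> real) \<Rightarrow> 'a set \<Rightarrow> bool" where
  "is_maximal_minimizer E X \<longleftrightarrow> is_minimizer E X \<and>
     (\<forall>Y. is_minimizer E Y \<and> X \<subseteq> Y \<longrightarrow> Y = X)"

end

theory Submission
  imports Defs
begin

text \<open>Since d is a metric, E(X) = 0 exactly for the invariant sets X = f(X), and E \<ge> 0, so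
  once one invariant compact set exists the minimizers of E are precisely the invariant compact
  sets. Every such set is bounded, hence lies in some ball B_r(0) with r large, and being
  invariant it lies in Inv(B_r(0)) = S. As S is itself invariant, it is the greatest minimizer,
  and therefore the unique maximal one.\<close>

lemma fpow_0 [simp]: "fpow f 0 = id"
  by (simp add: fpow_def)

lemma fpow_shift:
  assumes "bij f"
  shows "fpow f k (f x) = fpow f (k + 1) x"
proof (cases "0 \<le> k")
  case True
  then have "nat (k + 1) = Suc (nat k)" by simp
  with True show ?thesis by (simp add: fpow_def funpow_Suc_right del: funpow.simps)
next
  case False
  have inv_f: "inv f (f x) = x" using assms by (simp add: bij_is_inj)
  have "nat (- k) = Suc (nat (- (k + 1)))" using False by simp
  with False inv_f show ?thesis
    by (cases "k + 1 = 0") (simp_all add: fpow_def funpow_Suc_right del: funpow.simps)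
qed

lemma funpow_in_invariant:
  assumes "g ` Y \<subseteq> Y" "x \<in> Y"
  shows "(g ^^ n) x \<in> Y"
  using assms by (induction n) auto

lemma invariant_subset_Inv:
  assumes "bij f" "f ` Y = Y" "Y \<subseteq> Q"
  shows "Y \<subseteq> Inv f Q"
proof
  fix x assume "x \<in> Y"
  have "inv f ` Y = Y" using assms(1,2) by (metis bij_is_inj image_inv_f_f)
  with \<open>x \<in> Y\<close> assms(2) have "fpow f k x \<in> Y" for k
    unfolding fpow_def by (auto intro: funpow_in_invariant)
  with \<open>x \<in> Y\<close> assms(3) show "x \<in> Inv f Q" unfolding Inv_def by auto
qed

lemma image_Inv:
  assumes "bij f"
  shows "f ` Inv f Q = Inv f Q"
proof
  show "f ` Inv f Q \<subseteq> Inv f Q"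
  proof
    fix y assume "y \<in> f ` Inv f Q"
    then obtain x where "x \<in> Inv f Q" "y = f x" by auto
    then have "\<forall>k. fpow f k y \<in> Q" using fpow_shift[OF assms] unfolding Inv_def by auto
    moreover from this have "y \<in> Q" by (metis fpow_0 id_apply)
    ultimately show "y \<in> Inv f Q" unfolding Inv_def by blast
  qed
next
  show "Inv f Q \<subseteq> f ` Inv f Q"
  proof
    fix x assume x: "x \<in> Inv f Q"
    define y where "y = inv f x"
    have fy: "f y = x" unfolding y_def using assms by (simp add: bij_is_surj surj_f_inv_f)
    have "fpow f k y \<in> Q" for k
      using x fy fpow_shift[OF assms, of "k - 1" y] unfolding Inv_def by (metis (mono_tags) diff_add_cancel mem_Collect_eq)
    moreover from this have "y \<in> Q" by (metis fpow_0 id_apply)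
    ultimately have "y \<in> Inv f Q" unfolding Inv_def by blast
    with fy show "x \<in> f ` Inv f Q" by blast
  qed
qed

lemma diffeomorphism_imp_continuous:
  assumes "diffeomorphism f"
  shows "continuous_on UNIV f"
proof -
  obtain f' where "\<forall>x. (f has_derivative blinfun_apply (f' x)) (at x)"
    using assms unfolding diffeomorphism_def C1_map_def by blast
  then show ?thesis
    by (meson continuous_at_imp_continuous_on has_derivative_continuous)
qed

lemma image_in_Cpt:
  assumes "continuous_on UNIV f" "Y \<in> Cpt"
  shows "f ` Y \<in> Cpt"
  using assms unfolding Cpt_def by (auto intro: compact_continuous_image continuous_on_subset)

lemma energy_nonneg:
  assumes "metric_on Cpt D" "Y \<in> Cpt" "f ` Y \<in> Cpt"
  shows "0 \<le> energy D f Y"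
  using assms unfolding metric_on_def energy_def by blast

lemma energy_eq_0_iff:
  assumes "metric_on Cpt D" "Y \<in> Cpt" "f ` Y \<in> Cpt"
  shows "energy D f Y = 0 \<longleftrightarrow> f ` Y = Y"
  using assms unfolding metric_on_def energy_def by auto

lemma is_minimizer_energy_iff:
  assumes "metric_on Cpt D" "continuous_on UNIV f" "S \<in> Cpt" "f ` S = S"
  shows "is_minimizer (energy D f) Y \<longleftrightarrow> Y \<in> Cpt \<and> f ` Y = Y"
proof -
  have "energy D f S = 0" using assms energy_eq_0_iff by (metis image_in_Cpt)
  moreover have "0 \<le> energy D f Y" if "Y \<in> Cpt" for Y
    using that assms(1,2) energy_nonneg image_in_Cpt by blast
  moreover have "energy D f Y = 0 \<longleftrightarrow> f ` Y = Y" if "Y \<in> Cpt" for Y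
    using that assms(1,2) energy_eq_0_iff image_in_Cpt by blast
  ultimately show ?thesis
    unfolding is_minimizer_def using assms(3) by (metis order_antisym order_refl)
qed

lemma greatest_minimizer_unique_maximal:
  assumes "is_minimizer E S" "\<And>Y. is_minimizer E Y \<Longrightarrow> Y \<subseteq> S"
  shows "is_maximal_minimizer E S \<and> (\<forall>T. is_maximal_minimizer E T \<longrightarrow> T = S)"
  using assms unfolding is_maximal_minimizer_def by blast

lemma bounded_invariant_subset_eventual_Inv:
  fixes Y :: "'a::real_normed_vector set"
  assumes "bij f" "bounded Y" "f ` Y = Y" "\<forall>r\<ge>R. r > 0 \<longrightarrow> Inv f (cball 0 r) = S"
  shows "Y \<subseteq> S"
proof -
  obtain b where "b > 0" "Y \<subseteq> cball 0 b"
    using assms(2) unfolding bounded_pos by (auto simp: subset_iff)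
  define r where "r = max b R"
  with \<open>b > 0\<close> \<open>Y \<subseteq> cball 0 b\<close> have "Y \<subseteq> cball 0 r" "r > 0" "r \<ge> R" by auto
  with assms(1,3,4) show ?thesis using invariant_subset_Inv by metis
qed

theorem mainTheorem1:
  fixes f :: "'a::euclidean_space \<Rightarrow> 'a"
    and D :: "'a set \<Rightarrow> 'a set \<Rightarrow> real"
    and S :: "'a set"
  assumes "diffeomorphism f"
    and "metric_on Cpt D"
    and "S \<in> Cpt"
    and "\<exists>R. \<forall>r\<ge>R. r > 0 \<longrightarrow> Inv f (cball 0 r) = S"
  shows "is_maximal_minimizer (energy D f) S \<and>
         (\<forall>T. is_maximal_minimizer (energy D f) T \<longrightarrow> T = S)"
proof -
  have bij: "bij f" using assms(1) unfolding diffeomorphism_def by simp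
  obtain R where R: "\<forall>r\<ge>R. r > 0 \<longrightarrow> Inv f (cball 0 r) = S" using assms(4) by blast
  then have "S = Inv f (cball 0 (max R 1))" by simp
  then have "f ` S = S" using image_Inv[OF bij] by simp
  note minimizers = is_minimizer_energy_iff[OF assms(2)
      diffeomorphism_imp_continuous[OF assms(1)] assms(3) this]
  show ?thesis
  proof (rule greatest_minimizer_unique_maximal)
    show "is_minimizer (energy D f) S" using minimizers assms(3) \<open>f ` S = S\<close> by simp
  next
    fix Y assume "is_minimizer (energy D f) Y"
    then have "bounded Y" "f ` Y = Y"
      using minimizers unfolding Cpt_def by (auto intro: compact_imp_bounded)
    then show "Y \<subseteq> S" using bounded_invariant_subset_eventual_Inv[OF bij _ _ R] by blast
  qed
qed

end
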